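(* Let $(G,I,O)$ be a geometry with $|I|=|O|$. If $(G,I,O)$ has a causal path cover $\mathcal C$, then $\mathcal C$ is the unique maximum-size collection of pairwise vertex-disjoint directed paths in $G$ from $I$ to $O$ (i.e. any collection of pairwise vertex-disjoint directed paths, each starting in $I$ and ending in $O$, of maximum cardinality, equals $\mathcal C$).
   Context: Graphs are finite, simple, undirected, without self-loops; $v\sim w$ denotes adjacency. A geometry is $(G,I,O)$ with $I,O\subseteq V(G)$. A directed path in $G$ is a sequence of distinct vertices $u_0,\ldots,u_\ell$ ($\ell\ge0$, $\ell=0$ allowed) with consecutive vertices adjacent, oriented by arcs $u_i\to u_{i+1}$; an $I$–$O$ path starts in $I$ and ends in $O$. A path cover of $(G,I,O)$ is a collection of directed paths in $G$ such that every vertex lies on exactly one path, each path meets $I$ at most at its initial vertex, and each path meets $O$ exactly at its final vertex. For a family $\mathcal P$ of vertex-disjoint directed paths, an edge is covered by $\mathcal P$ if it underlies an arc of a path of $\mathcal P$. An influencing walk for $\mathcal P$ is a walk that is a concatenation of zero or more segments of the types (i) $v\to w$, an arc of a path of $\mathcal P$; (ii) $v\to z\to w$ with $v\to z$ an arc of a path of $\mathcal P$ and $zw\in E(G)$ not covered by $\mathcal P$. A vicious circuit for $\mathcal P$ is a closed influencing walk with at least one segment. A causal path cover is a path cover having no vicious circuits. *)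

theory Defs
  imports Main
begin

definition simple_graph :: "'a set \<Rightarrow> ('a \<Rightarrow> 'a \<Rightarrow> bool) \<Rightarrow> bool" where
  "simple_graph V E \<longleftrightarrow> finite V \<and> (\<forall>v w. E v w \<longrightarrow> v \<in> V \<and> w \<in> V)
     \<and> (\<forall>v w. E v w \<longrightarrow> E w v) \<and> (\<forall>v. \<not> E v v)"

definition dpath :: "'a set \<Rightarrow> ('a \<Rightarrow> 'a \<Rightarrow> bool) \<Rightarrow> 'a list \<Rightarrow> bool" where
  "dpath V E p \<longleftrightarrow> p \<noteq> [] \<and> distinct p \<and> set p \<subseteq> V \<and> successively E p"

definition IO_path :: "'a set \<Rightarrow> ('a \<Rightarrow> 'a \<Rightarrow> bool) \<Rightarrow> 'a set \<Rightarrow> 'a set \<Rightarrow> 'a list \<Rightarrow> bool" where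
  "IO_path V E In Out p \<longleftrightarrow> dpath V E p \<and> hd p \<in> In \<and> last p \<in> Out"

definition vertex_disjoint :: "'a list set \<Rightarrow> bool" where
  "vertex_disjoint P \<longleftrightarrow> (\<forall>p\<in>P. \<forall>q\<in>P. p \<noteq> q \<longrightarrow> set p \<inter> set q = {})"

definition path_cover :: "'a set \<Rightarrow> ('a \<Rightarrow> 'a \<Rightarrow> bool) \<Rightarrow> 'a set \<Rightarrow> 'a set \<Rightarrow> 'a list set \<Rightarrow> bool" where
  "path_cover V E In Out C \<longleftrightarrow>
     (\<forall>p\<in>C. dpath V E p)
   \<and> (\<forall>v\<in>V. \<exists>!p. p \<in> C \<and> v \<in> set p)
   \<and> (\<forall>p\<in>C. \<forall>i<length p. p ! i \<in> In \<longrightarrow> i = 0)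
   \<and> (\<forall>p\<in>C. set p \<inter> Out = {last p})"

definition arc :: "'a list set \<Rightarrow> 'a \<Rightarrow> 'a \<Rightarrow> bool" where
  "arc P v w \<longleftrightarrow> (\<exists>p\<in>P. \<exists>i. Suc i < length p \<and> p ! i = v \<and> p ! Suc i = w)"

definition covered :: "'a list set \<Rightarrow> 'a \<Rightarrow> 'a \<Rightarrow> bool" where
  "covered P v w \<longleftrightarrow> arc P v w \<or> arc P w v"

text \<open>One segment of an influencing walk, from v to w (types (i) and (ii)).\<close>
definition segment :: "('a \<Rightarrow> 'a \<Rightarrow> bool) \<Rightarrow> 'a list set \<Rightarrow> 'a \<Rightarrow> 'a \<Rightarrow> bool" where
  "segment E P v w \<longleftrightarrow> arc P v w \<or> (\<exists>z. arc P v z \<and> E z w \<and> \<not> covered P z w)"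

definition has_vicious_circuit :: "('a \<Rightarrow> 'a \<Rightarrow> bool) \<Rightarrow> 'a list set \<Rightarrow> bool" where
  "has_vicious_circuit E P \<longleftrightarrow> (\<exists>v. (v, v) \<in> {(x, y). segment E P x y}\<^sup>+)"

definition causal_path_cover :: "'a set \<Rightarrow> ('a \<Rightarrow> 'a \<Rightarrow> bool) \<Rightarrow> 'a set \<Rightarrow> 'a set \<Rightarrow> 'a list set \<Rightarrow> bool" where
  "causal_path_cover V E In Out C \<longleftrightarrow> path_cover V E In Out C \<and> \<not> has_vicious_circuit E C"

definition disjoint_IO_paths :: "'a set \<Rightarrow> ('a \<Rightarrow> 'a \<Rightarrow> bool) \<Rightarrow> 'a set \<Rightarrow> 'a set \<Rightarrow> 'a list set \<Rightarrow> bool" where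
  "disjoint_IO_paths V E In Out P \<longleftrightarrow> (\<forall>p\<in>P. IO_path V E In Out p) \<and> vertex_disjoint P"

end

theory Submission
  imports Defs
begin

text \<open>
  Counting endpoints shows that every path of C starts in In,
  so C is itself such a family, with |C| = |In|; hence P also has |In| paths and they start
  at every vertex of In. The heart of the proof is that every arc of P is an arc of C. It
  is shown by well-founded induction along the influence relation of C (the segments of
  influencing walks), which is well-founded precisely because C has no vicious circuits.
  Then each path of P walks along the C-path through its first vertex until it meets Out,
  so it is that C-path; thus P is contained in C, and equal to it by counting.
\<close>

section \<open>Families of vertex-disjoint paths\<close>

lemma arc_nthI: "p \<in> P \<Longrightarrow> Suc i < length p \<Longrightarrow> arc P (p ! i) (p ! Suc i)"
  unfolding arc_def by blast

lemma arcE: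
  assumes "arc P v w"
  obtains p i where "p \<in> P" "Suc i < length p" "p ! i = v" "p ! Suc i = w"
  using assms unfolding arc_def by blast

lemma vertex_disjointD: "vertex_disjoint P \<Longrightarrow> p \<in> P \<Longrightarrow> q \<in> P \<Longrightarrow> v \<in> set p \<Longrightarrow> v \<in> set q \<Longrightarrow> p = q"
  unfolding vertex_disjoint_def by blast

lemma arc_target_unique:
  assumes "vertex_disjoint P" "\<forall>p\<in>P. distinct p" "arc P v w" "arc P v w'"
  shows "w = w'"
proof -
  obtain p i where p: "p \<in> P" "Suc i < length p" "p ! i = v" "p ! Suc i = w"
    using assms(3) by (rule arcE)
  obtain q j where q: "q \<in> P" "Suc j < length q" "q ! j = v" "q ! Suc j = w'"
    using assms(4) by (rule arcE)
  have "p = q" using vertex_disjointD[OF assms(1) p(1) q(1), of v] p q by (metis Suc_lessD nth_mem)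
  with p q assms(2) have "i = j" by (metis Suc_lessD nth_eq_iff_index_eq)
  with p q \<open>p = q\<close> show ?thesis by simp
qed

lemma arc_source_unique:
  assumes "vertex_disjoint P" "\<forall>p\<in>P. distinct p" "arc P v w" "arc P v' w"
  shows "v = v'"
proof -
  obtain p i where p: "p \<in> P" "Suc i < length p" "p ! i = v" "p ! Suc i = w"
    using assms(3) by (rule arcE)
  obtain q j where q: "q \<in> P" "Suc j < length q" "q ! j = v'" "q ! Suc j = w"
    using assms(4) by (rule arcE)
  have "p = q" using vertex_disjointD[OF assms(1) p(1) q(1), of w] p q by (metis nth_mem)
  with p q assms(2) have "i = j" by (metis nth_eq_iff_index_eq Suc_inject)
  with p q \<open>p = q\<close> show ?thesis by simp
qed

lemma no_arc_from_last:
  assumes "vertex_disjoint P" "\<forall>p\<in>P. distinct p" "p \<in> P" "p \<noteq> []"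
  shows "\<not> arc P (last p) w"
proof
  assume "arc P (last p) w"
  then obtain q i where q: "q \<in> P" "Suc i < length q" "q ! i = last p" "q ! Suc i = w"
    by (rule arcE)
  have "q = p" using vertex_disjointD[OF assms(1) q(1) assms(3), of "last p"] q assms(4)
    by (metis Suc_lessD last_in_set nth_mem)
  with q assms(2,4) have "i = length q - 1"
    by (metis Suc_lessD diff_less last_conv_nth length_greater_0_conv nth_eq_iff_index_eq zero_less_one)
  with q(2) show False by simp
qed

lemma no_arc_into_hd:
  assumes "vertex_disjoint P" "\<forall>p\<in>P. distinct p" "p \<in> P" "p \<noteq> []"
  shows "\<not> arc P v (hd p)"
proof
  assume "arc P v (hd p)"
  then obtain q i where q: "q \<in> P" "Suc i < length q" "q ! i = v" "q ! Suc i = hd p"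
    by (rule arcE)
  have "q = p" using vertex_disjointD[OF assms(1) q(1) assms(3), of "hd p"] q assms(4)
    by (metis hd_in_set nth_mem)
  with q assms(2,4) have "Suc i = 0"
    by (metis hd_conv_nth length_greater_0_conv nth_eq_iff_index_eq)
  then show False by simp
qed

lemma arc_from_inner:
  assumes "p \<in> P" "v \<in> set p" "v \<noteq> last p"
  shows "\<exists>w. arc P v w"
proof -
  obtain i where i: "i < length p" "p ! i = v" using assms(2) by (metis in_set_conv_nth)
  with assms(3) have "i \<noteq> length p - 1" by (metis last_conv_nth list.size(3) not_less0)
  with i have "Suc i < length p" by linarith
  with i assms(1) show ?thesis using arc_nthI by metis
qed

lemma arc_into_inner:
  assumes "p \<in> P" "v \<in> set p" "v \<noteq> hd p"
  shows "\<exists>u. arc P u v"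
proof -
  obtain i where i: "i < length p" "p ! i = v" using assms(2) by (metis in_set_conv_nth)
  with assms(3) obtain j where "i = Suc j" by (metis hd_conv_nth list.size(3) not_less0 old.nat.exhaust)
  with i assms(1) show ?thesis using arc_nthI by metis
qed

lemma arc_on_paths: "arc P v w \<Longrightarrow> v \<in> \<Union>(set ` P) \<and> w \<in> \<Union>(set ` P)"
  by (elim arcE) (metis Suc_lessD UN_I nth_mem)

lemma arc_edge: "\<forall>p\<in>P. successively E p \<Longrightarrow> arc P v w \<Longrightarrow> E v w"
  by (elim arcE) (metis successively_nth)

lemma arc_walk_is_prefix:
  assumes disj: "vertex_disjoint C" "\<forall>p\<in>C. distinct p"
    and p: "p \<in> C" "p \<noteq> []" and hd: "hd q = hd p" "q \<noteq> []"
    and steps: "\<forall>i. Suc i < length q \<longrightarrow> arc C (q ! i) (q ! Suc i)"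
  shows "q = take (length q) p"
proof -
  have agree: "k < length p \<and> q ! k = p ! k" if "k < length q" for k
    using that
  proof (induction k)
    case 0
    with p hd show ?case by (simp add: hd_conv_nth)
  next
    case (Suc k)
    then have k: "k < length p" "q ! k = p ! k" by simp_all
    have step: "arc C (p ! k) (q ! Suc k)" using steps Suc.prems k(2) by metis
    have "Suc k < length p"
    proof (rule ccontr)
      assume "\<not> Suc k < length p"
      with k(1) have "k = length p - 1" by linarith
      with p(2) have "p ! k = last p" by (simp add: last_conv_nth)
      with step no_arc_from_last[OF disj p] show False by simp
    qed
    with step arc_target_unique[OF disj] arc_nthI[OF p(1)] show ?case by metis
  qed
  then have "length q - 1 < length p" using hd(2) by simp
  then have "length q \<le> length p" by linarith
  with agree show ?thesis by (intro nth_equalityI) auto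
qed

lemma prefix_with_last_is_whole:
  assumes "distinct p" "q = take n p" "q \<noteq> []" "last q = last p"
  shows "q = p"
proof (rule ccontr)
  assume "q \<noteq> p"
  with assms(2) have short: "n < length p" by (metis not_less take_all)
  with assms(2,3) have len: "length q = n" "0 < n" by auto
  have "last q = q ! (n - 1)" using assms(3) len by (simp add: last_conv_nth)
  also have "\<dots> = p ! (n - 1)" using assms(2) len by simp
  finally have "p ! (n - 1) = last p" using assms(4) by simp
  also have "last p = p ! (length p - 1)" using short by (intro last_conv_nth) auto
  finally have "p ! (n - 1) = p ! (length p - 1)" .
  with assms(1) short len have "n - 1 = length p - 1" by (simp add: nth_eq_iff_index_eq)
  with short len show False by linarith
qed

section \<open>Path covers\<close>

lemma path_cover_dpath: "path_cover V E In Out C \<Longrightarrow> p \<in> C \<Longrightarrow> dpath V E p"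
  unfolding path_cover_def by blast

lemma path_cover_unique: "path_cover V E In Out C \<Longrightarrow> v \<in> V \<Longrightarrow> \<exists>!p. p \<in> C \<and> v \<in> set p"
  unfolding path_cover_def by blast

lemma path_cover_In_index:
  "path_cover V E In Out C \<Longrightarrow> p \<in> C \<Longrightarrow> i < length p \<Longrightarrow> p ! i \<in> In \<Longrightarrow> i = 0"
  unfolding path_cover_def by blast

lemma path_cover_Out: "path_cover V E In Out C \<Longrightarrow> p \<in> C \<Longrightarrow> set p \<inter> Out = {last p}"
  unfolding path_cover_def by blast

lemma path_cover_paths:
  assumes "path_cover V E In Out C" "p \<in> C"
  shows "p \<noteq> []" "distinct p" "set p \<subseteq> V" "last p \<in> Out"
  using path_cover_dpath[OF assms] path_cover_Out[OF assms] unfolding dpath_def by auto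

lemma path_cover_disjoint:
  assumes cover: "path_cover V E In Out C"
  shows "vertex_disjoint C" "\<forall>p\<in>C. distinct p"
proof -
  show "vertex_disjoint C"
    unfolding vertex_disjoint_def
  proof (intro ballI impI)
    fix p q assume pq: "p \<in> C" "q \<in> C" "p \<noteq> q"
    show "set p \<inter> set q = {}"
    proof (rule ccontr)
      assume "set p \<inter> set q \<noteq> {}"
      then obtain v where v: "v \<in> set p" "v \<in> set q" by blast
      with pq(1) path_cover_paths(3)[OF cover] have "v \<in> V" by blast
      with path_cover_unique[OF cover] pq v show False by blast
    qed
  qed
  show "\<forall>p\<in>C. distinct p" using path_cover_paths(2)[OF cover] by blast
qed

text \<open>On each path of a cover, the vertex in Out is the last one, so no arc leaves Out;
  likewise a vertex in In can only be the first vertex of its path.\<close>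

lemma path_cover_arc_source_notin_Out:
  assumes cover: "path_cover V E In Out C" and "arc C v w"
  shows "v \<notin> Out"
proof
  assume "v \<in> Out"
  from assms(2) obtain p i where p: "p \<in> C" "Suc i < length p" "p ! i = v" "p ! Suc i = w"
    by (rule arcE)
  then have "v \<in> set p" by (metis Suc_lessD nth_mem)
  with path_cover_Out[OF cover p(1)] \<open>v \<in> Out\<close> have "v = last p" by blast
  with assms(2) no_arc_from_last[OF path_cover_disjoint[OF cover] p(1)]
    path_cover_paths(1)[OF cover p(1)] show False by simp
qed

lemma path_cover_In_is_hd:
  assumes cover: "path_cover V E In Out C" and "p \<in> C" "v \<in> set p" "v \<in> In"
  shows "v = hd p"
proof -
  obtain i where i: "i < length p" "p ! i = v" using assms(3) by (metis in_set_conv_nth)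
  with path_cover_In_index[OF cover \<open>p \<in> C\<close>] assms(4) have "i = 0" by blast
  with i show ?thesis by (simp add: hd_conv_nth)
qed

lemma finite_path_family:
  assumes "finite V" "\<forall>p\<in>P. set p \<subseteq> V \<and> distinct p"
  shows "finite P"
  using assms finite_subset[OF _ finite_subset_distinct[OF assms(1)]] by blast

lemma path_cover_finite:
  assumes cover: "path_cover V E In Out C" and finV: "finite V"
  shows "finite C"
  by (intro finite_path_family[OF finV] ballI conjI path_cover_paths[OF cover])

text \<open>If |In| = |Out|, every path of a cover starts in In: the paths of a cover are
  in bijection with Out via their last vertex, and each vertex of In starts a
  different path, so these already exhaust the cover.\<close>

lemma path_cover_starts_in_In:
  assumes cover: "path_cover V E In Out C" and finV: "finite V"
    and sub: "In \<subseteq> V" "Out \<subseteq> V" and card: "card In = card Out"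
  shows "\<forall>p\<in>C. hd p \<in> In" "card C = card In"
proof -
  have finC: "finite C" by (rule path_cover_finite[OF cover finV])
  have disj: "vertex_disjoint C" by (rule path_cover_disjoint(1)[OF cover])
  have "bij_betw last C Out"
  proof (rule bij_betwI')
    fix p q assume pq: "p \<in> C" "q \<in> C"
    show "(last p = last q) = (p = q)"
      using vertex_disjointD[OF disj pq, of "last p"] path_cover_paths(1)[OF cover] pq by auto
  next
    fix p assume "p \<in> C" then show "last p \<in> Out" by (rule path_cover_paths(4)[OF cover])
  next
    fix v assume v: "v \<in> Out"
    with sub have "v \<in> V" by blast
    then obtain p where "p \<in> C" "v \<in> set p" using path_cover_unique[OF cover] by blast
    with path_cover_Out[OF cover] v show "\<exists>p\<in>C. v = last p" by blast
  qed
  with card show cardC: "card C = card In" by (simp add: bij_betw_same_card)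
  define path_of where "path_of v = (THE p. p \<in> C \<and> v \<in> set p)" for v
  have path_of: "path_of v \<in> C \<and> v \<in> set (path_of v)" if "v \<in> In" for v
    unfolding path_of_def using theI'[OF path_cover_unique[OF cover]] that sub by blast
  have hd_path_of: "hd (path_of v) = v" if "v \<in> In" for v
    using path_cover_In_is_hd[OF cover] path_of that by metis
  have "inj_on path_of In" by (rule inj_onI) (metis hd_path_of)
  with cardC have "card (path_of ` In) = card C" by (simp add: card_image)
  moreover have "path_of ` In \<subseteq> C" using path_of by blast
  ultimately have "path_of ` In = C" using card_subset_eq[OF finC] by blast
  with hd_path_of show "\<forall>p\<in>C. hd p \<in> In" by auto
qed

lemma path_cover_disjoint_IO_paths:
  assumes cover: "path_cover V E In Out C" and starts: "\<forall>p\<in>C. hd p \<in> In"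
  shows "disjoint_IO_paths V E In Out C"
  unfolding disjoint_IO_paths_def IO_path_def
  using path_cover_dpath[OF cover] starts path_cover_paths(4)[OF cover] path_cover_disjoint(1)[OF cover]
  by blast

text \<open>Distinct paths of a disjoint family have distinct first vertices in In, so a family
  with at least |In| paths uses every vertex of In as a starting point.\<close>

lemma large_family_starts_everywhere:
  assumes P: "disjoint_IO_paths V E In Out P" and finV: "finite V" and sub: "In \<subseteq> V"
    and large: "card In \<le> card P"
  shows "hd ` P = In"
proof -
  have paths: "p \<noteq> []" "hd p \<in> In" if "p \<in> P" for p
    using P that unfolding disjoint_IO_paths_def IO_path_def dpath_def by auto
  have "inj_on hd P"
  proof (rule inj_onI)
    fix p q assume "p \<in> P" "q \<in> P" "hd p = hd q"
    moreover have "vertex_disjoint P" using P unfolding disjoint_IO_paths_def by blast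
    ultimately show "p = q" by (metis hd_in_set paths(1) vertex_disjointD)
  qed
  then have "card (hd ` P) = card P" by (rule card_image)
  moreover have "finite In" using finV sub by (rule finite_subset[rotated])
  moreover have "hd ` P \<subseteq> In" using paths(2) by blast
  ultimately show ?thesis using large card_seteq[of In "hd ` P"] by simp
qed

section \<open>The influence relation of a path family\<close>

text \<open>One segment of an influencing walk, as a relation; vicious circuits are exactly
  its cycles.\<close>

definition influence :: "('a \<Rightarrow> 'a \<Rightarrow> bool) \<Rightarrow> 'a list set \<Rightarrow> ('a \<times> 'a) set" where
  "influence E P = {(x, y). segment E P x y}"

lemma arc_influence: "arc P v w \<Longrightarrow> (v, w) \<in> influence E P"
  unfolding influence_def segment_def by simp

text \<open>Without vicious circuits the influence relation of a family of paths in a finite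
  graph is finite and acyclic, so its transitive closure is well-founded; this is what
  makes the induction in the main argument possible.\<close>

lemma causal_influence_wf:
  assumes G: "simple_graph V E" and paths: "\<forall>p\<in>P. set p \<subseteq> V"
    and causal: "\<not> has_vicious_circuit E P"
  shows "wf ((influence E P)\<^sup>+)"
proof -
  have "influence E P \<subseteq> V \<times> V"
  proof
    fix e assume "e \<in> influence E P"
    then obtain v w where e: "e = (v, w)" "segment E P v w" unfolding influence_def by blast
    have on_V: "a \<in> V \<and> b \<in> V" if "arc P a b" for a b
      using arc_on_paths[OF that] paths by blast
    from e(2) G show "e \<in> V \<times> V"
      unfolding segment_def simple_graph_def using on_V e(1) by blast
  qed
  moreover have "finite V" using G unfolding simple_graph_def by blast
  ultimately have "finite (influence E P)" using finite_subset by blast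
  moreover have "acyclic (influence E P)"
    using causal unfolding acyclic_def has_vicious_circuit_def influence_def by blast
  ultimately show ?thesis by (intro wf_trancl finite_acyclic_wf)
qed

lemma path_influence:
  assumes "p \<in> P" "k \<le> j" "j < length p"
  shows "(p ! k, p ! j) \<in> (influence E P)\<^sup>*"
  using assms(2,3)
proof (induction j)
  case 0
  then show ?case by simp
next
  case (Suc j)
  show ?case
  proof (cases "k = Suc j")
    case False
    with Suc have "(p ! k, p ! j) \<in> (influence E P)\<^sup>*" by simp
    moreover have "(p ! j, p ! Suc j) \<in> influence E P"
      by (rule arc_influence[OF arc_nthI[OF assms(1) Suc.prems(2)]])
    ultimately show ?thesis by (rule rtrancl_into_rtrancl)
  qed simp
qed

text \<open>The predecessor y of x influences every other neighbour w of x: either the edge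
  xw is uncovered, giving a segment of type (ii), or it is the arc x to w, giving two
  segments of type (i) (it cannot be the arc w to x, as y is the unique predecessor).\<close>

lemma edge_influence:
  assumes disj: "vertex_disjoint P" "\<forall>p\<in>P. distinct p"
    and yx: "arc P y x" and xw: "E x w" and "w \<noteq> y"
  shows "(y, w) \<in> (influence E P)\<^sup>+"
proof (cases "covered P x w")
  case False
  with yx xw have "(y, w) \<in> influence E P" unfolding influence_def segment_def by blast
  then show ?thesis by blast
next
  case True
  moreover have "\<not> arc P w x" using arc_source_unique[OF disj yx] \<open>w \<noteq> y\<close> by blast
  ultimately have "arc P x w" unfolding covered_def by blast
  with yx show ?thesis using arc_influence by (meson trancl.r_into_trancl trancl_into_trancl)
qed

section \<open>A causal cover contains every maximum family\<close>

locale cover_and_family =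
  fixes V :: "'a set" and E :: "'a \<Rightarrow> 'a \<Rightarrow> bool" and In Out :: "'a set"
    and C P :: "'a list set"
  assumes sym: "\<And>v w. E v w \<Longrightarrow> E w v"
    and cover: "path_cover V E In Out C" and cover_starts: "\<forall>p\<in>C. hd p \<in> In"
    and causal: "wf ((influence E C)\<^sup>+)"
    and family: "disjoint_IO_paths V E In Out P" and family_starts: "hd ` P = In"
begin

lemma cover_disjoint: "vertex_disjoint C" "\<forall>p\<in>C. distinct p"
  using path_cover_disjoint[OF cover] by blast+

lemma family_disjoint: "vertex_disjoint P" "\<forall>p\<in>P. distinct p"
  using family unfolding disjoint_IO_paths_def IO_path_def dpath_def by blast+

lemma family_paths:
  assumes "q \<in> P"
  shows "q \<noteq> []" "set q \<subseteq> V" "successively E q" "hd q \<in> In" "last q \<in> Out"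
  using family assms unfolding disjoint_IO_paths_def IO_path_def dpath_def by blast+

text \<open>Walking along a cover path from its start, as long as every P-arc leaving the
  vertices passed so far is also a C-arc, one never leaves the vertices of P: the
  start lies in In, and each step leaves a vertex not in Out, which therefore has a
  P-arc, necessarily the next C-arc.\<close>

lemma cover_prefix_on_family:
  assumes p: "p \<in> C" and "j < length p"
    and agree: "\<forall>k<j. \<forall>w. arc P (p ! k) w \<longrightarrow> arc C (p ! k) w"
  shows "p ! j \<in> \<Union>(set ` P)"
  using assms(2,3)
proof (induction j)
  case 0
  have "p ! 0 \<in> In" using cover_starts p path_cover_paths(1)[OF cover p] by (metis hd_conv_nth)
  then obtain q where "q \<in> P" "p ! 0 = hd q" using family_starts by blast
  then show ?case using family_paths(1) hd_in_set by fastforce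
next
  case (Suc j)
  have on_P: "p ! j \<in> \<Union>(set ` P)" using Suc.prems by (intro Suc.IH) auto
  have arcC: "arc C (p ! j) (p ! Suc j)" by (rule arc_nthI[OF p Suc.prems(1)])
  have "p ! j \<notin> Out" by (rule path_cover_arc_source_notin_Out[OF cover arcC])
  moreover from on_P obtain q where q: "q \<in> P" "p ! j \<in> set q" by blast
  ultimately have "p ! j \<noteq> last q" using family_paths(5)[OF q(1)] by auto
  then obtain w where w: "arc P (p ! j) w" using arc_from_inner[OF q] by blast
  then have "arc C (p ! j) w" using Suc.prems(2) by simp
  with arcC have "p ! Suc j = w" by (rule arc_target_unique[OF cover_disjoint])
  with arc_on_paths[OF w] show ?case by simp
qed

text \<open>Suppose u to x is an arc of P
  but not of C, with u minimal in the influence order. Since x is not in In, it has a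
  C-predecessor y different from u, and y influences u (lemma edge_influence). By
  minimality all vertices of the C-path up to y have their P-arcs in C, so y lies on P;
  the P-arc leaving y is then a C-arc and must end in x, making y a second
  P-predecessor of x.\<close>

lemma family_arc_is_cover_arc: "arc P u x \<Longrightarrow> arc C u x"
  using causal
proof (induction u arbitrary: x rule: wf_induct_rule)
  case (less u)
  note IH = less.IH and ux = less.prems
  show "arc C u x"
  proof (rule ccontr)
    assume not_C: "\<not> arc C u x"
    obtain q where q: "q \<in> P" "x \<in> set q"
      using arc_on_paths[OF ux] by blast
    have x_notin_In: "x \<notin> In"
    proof
      assume "x \<in> In"
      then obtain q' where "q' \<in> P" "x = hd q'" using family_starts by blast
      then show False
        using no_arc_into_hd[OF family_disjoint] family_paths(1) ux by metis
    qed
    have "x \<in> V" using q family_paths(2) by blast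
    then obtain p where p: "p \<in> C" "x \<in> set p" using path_cover_unique[OF cover] by blast
    have "x \<noteq> hd p" using cover_starts p(1) x_notin_In by metis
    then obtain y where yx: "arc C y x" using arc_into_inner[OF p] by blast
    have "y \<noteq> u" using yx not_C by blast
    have "E x u" using arc_edge[OF _ ux] family_paths(3) sym by blast
    then have yu: "(y, u) \<in> (influence E C)\<^sup>+"
      using edge_influence[OF cover_disjoint yx] \<open>y \<noteq> u\<close> by blast
    obtain p' j where p': "p' \<in> C" "Suc j < length p'" "p' ! j = y" "p' ! Suc j = x"
      using yx by (rule arcE)
    have "\<forall>k<j. \<forall>w. arc P (p' ! k) w \<longrightarrow> arc C (p' ! k) w"
    proof (intro allI impI)
      fix k w assume "k < j" "arc P (p' ! k) w"
      moreover have "(p' ! k, y) \<in> (influence E C)\<^sup>*"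
        using path_influence[OF p'(1), of k j] \<open>k < j\<close> p'(2,3) by simp
      ultimately show "arc C (p' ! k) w" using IH yu by (meson rtrancl_trancl_trancl)
    qed
    then have "p' ! j \<in> \<Union>(set ` P)"
      by (rule cover_prefix_on_family[OF p'(1) Suc_lessD[OF p'(2)]])
    then have "y \<in> \<Union>(set ` P)" using p'(3) by simp
    then obtain r where r: "r \<in> P" "y \<in> set r" by blast
    have "y \<notin> Out" by (rule path_cover_arc_source_notin_Out[OF cover yx])
    then have "y \<noteq> last r" using family_paths(5)[OF r(1)] by auto
    then obtain x' where yx': "arc P y x'" using arc_from_inner[OF r] by blast
    then have "arc C y x'" using IH yu by blast
    with yx have "x = x'" by (rule arc_target_unique[OF cover_disjoint])
    with yx' ux have "y = u" using arc_source_unique[OF family_disjoint] by blast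
    with \<open>y \<noteq> u\<close> show False ..
  qed
qed

text \<open>Consequently each path of P follows the C-path through its first vertex, and ending
  in Out it must be that whole path.\<close>

lemma family_path_in_cover:
  assumes q: "q \<in> P"
  shows "q \<in> C"
proof -
  have "hd q \<in> V" using family_paths(1,2)[OF q] hd_in_set by blast
  then obtain p where p: "p \<in> C" "hd q \<in> set p" using path_cover_unique[OF cover] by blast
  have start: "hd q = hd p" by (rule path_cover_In_is_hd[OF cover p family_paths(4)[OF q]])
  have "\<forall>i. Suc i < length q \<longrightarrow> arc C (q ! i) (q ! Suc i)"
    using arc_nthI[OF q] family_arc_is_cover_arc by blast
  then have prefix: "q = take (length q) p"
    by (rule arc_walk_is_prefix[OF cover_disjoint p(1) path_cover_paths(1)[OF cover p(1)]
          start family_paths(1)[OF q]])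
  have "set q \<subseteq> set p" by (subst prefix) (rule set_take_subset)
  then have "last q \<in> set p" using family_paths(1)[OF q] last_in_set by blast
  then have "last q = last p" using path_cover_Out[OF cover p(1)] family_paths(5)[OF q] by blast
  then have "q = p"
    using prefix_with_last_is_whole[OF path_cover_paths(2)[OF cover p(1)] prefix family_paths(1)[OF q]]
    by blast
  with p(1) show ?thesis by simp
qed

end

theorem mainTheorem11:
  fixes V :: "'a set" and E :: "'a \<Rightarrow> 'a \<Rightarrow> bool" and In Out :: "'a set" and C :: "'a list set"
  assumes "simple_graph V E" and "In \<subseteq> V" and "Out \<subseteq> V" and "card In = card Out"
    and "causal_path_cover V E In Out C"
  shows "disjoint_IO_paths V E In Out C
         \<and> (\<forall>P. disjoint_IO_paths V E In Out P
                 \<and> (\<forall>Q. disjoint_IO_paths V E In Out Q \<longrightarrow> card Q \<le> card P)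
                 \<longrightarrow> P = C)"
proof -
  have finV: "finite V" and sym: "\<And>v w. E v w \<Longrightarrow> E w v"
    using assms(1) unfolding simple_graph_def by blast+
  have cover: "path_cover V E In Out C" and causal: "\<not> has_vicious_circuit E C"
    using assms(5) unfolding causal_path_cover_def by blast+
  have starts: "\<forall>p\<in>C. hd p \<in> In" and cardC: "card C = card In"
    using path_cover_starts_in_In[OF cover finV assms(2-4)] by blast+
  have C_IO: "disjoint_IO_paths V E In Out C" by (rule path_cover_disjoint_IO_paths[OF cover starts])
  have wf: "wf ((influence E C)\<^sup>+)"
    using causal_influence_wf[OF assms(1) _ causal] path_cover_paths(3)[OF cover] by blast
  show ?thesis
  proof (intro conjI allI impI)
    fix P assume "disjoint_IO_paths V E In Out P
                 \<and> (\<forall>Q. disjoint_IO_paths V E In Out Q \<longrightarrow> card Q \<le> card P)"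
    then have P: "disjoint_IO_paths V E In Out P" and larger: "card C \<le> card P"
      using C_IO by blast+
    then have "hd ` P = In" using large_family_starts_everywhere[OF P finV assms(2)] cardC by simp
    then interpret cover_and_family V E In Out C P
      using sym cover starts wf P by unfold_locales
    have "P \<subseteq> C" using family_path_in_cover by blast
    with path_cover_finite[OF cover finV] larger show "P = C" by (simp add: card_seteq)
  qed (rule C_IO)
qed

end
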